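(* Let $T$ be an invertible operator in $\mathcal D(\mathcal P_n)$ and let $\Omega$ be a convex circular domain (i.e. an open or closed disk or half-plane) with $Z(T\phi_n)\subset\Omega$. Then $Z(Tf)\subset Z(f)+\Omega$ for all $f\in\mathcal P_n\setminus\{0\}$.
   Context: Let $n\ge 1$ be an integer and $\mathcal P_n$ the complex vector space of polynomials in one complex variable of degree at most $n$; $\phi_k(z)=z^k/k!$. $D$ is differentiation on $\mathcal P_n$, $I$ the identity, and $\mathcal D(\mathcal P_n)$ the linear span of $I,D,\dots,D^n$. For a nonzero $f$, $Z(f)$ is the multiset of roots of $f$ (with multiplicity; empty for nonzero constants). For $A,B\subset\mathbb C$, $A+B=\{u+v:u\in A,v\in B\}$. *)

theory Defs
  imports "HOL-Analysis.Analysis" "HOL-Computational_Algebra.Polynomial"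
begin

definition Pn :: "nat \<Rightarrow> complex poly set" where
  "Pn n = {f. degree f \<le> n}"

definition phi :: "nat \<Rightarrow> complex poly" where
  "phi k = monom (1 / of_nat (fact k)) k"

definition diffop :: "(nat \<Rightarrow> complex) \<Rightarrow> nat \<Rightarrow> complex poly \<Rightarrow> complex poly" where
  "diffop a n f = (\<Sum>k\<le>n. smult (a k) ((pderiv ^^ k) f))"

definition invertible_on_Pn :: "(complex poly \<Rightarrow> complex poly) \<Rightarrow> nat \<Rightarrow> bool" where
  "invertible_on_Pn T n \<longleftrightarrow> bij_betw T (Pn n) (Pn n)"

text \<open>Set of roots (the underlying set of the multiset Z(f)).\<close>
definition Zset :: "complex poly \<Rightarrow> complex set" where
  "Zset f = {z. poly f z = 0}"

definition setsum :: "complex set \<Rightarrow> complex set \<Rightarrow> complex set" where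
  "setsum A B = {u + v | u v. u \<in> A \<and> v \<in> B}"

definition convex_circular_domain :: "complex set \<Rightarrow> bool" where
  "convex_circular_domain \<Omega> \<longleftrightarrow>
     (\<exists>c r. r > 0 \<and> (\<Omega> = ball c r \<or> \<Omega> = cball c r)) \<or>
     (\<exists>u c. u \<noteq> 0 \<and> (\<Omega> = {z. Re (z * cnj u) > c} \<or> \<Omega> = {z. Re (z * cnj u) \<ge> c}))"

end

theory Submission
  imports Defs "HOL-Computational_Algebra.Fundamental_Theorem_Algebra"
begin

text \<open>
  Write \<open>T = \<Sum>k\<le>n. a\<^sub>k D\<^sup>k\<close>. Invertibility forces \<open>a\<^sub>0 \<noteq> 0\<close>, so \<open>P\<^sub>m = T \<phi>\<^sub>m\<close> has degree \<open>m\<close>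
  and \<open>P\<^sub>m' = P\<^sub>m\<^sub>-\<^sub>1\<close>. The engine is Laguerre's theorem for a convex circular domain \<open>K\<close>:
  if the zeros of \<open>P\<close> lie in \<open>K\<close> and \<open>z, t \<notin> K\<close>, then the polar derivative
  \<open>deg P \<cdot> P - (X - t) P'\<close> does not vanish at \<open>z\<close> (and neither does \<open>P'\<close>: Gauss-Lucas).
  This holds because \<open>x \<mapsto> 1 / (z - x)\<close> maps \<open>K\<close> onto a convex set avoiding \<open>0\<close>, so the
  centroid \<open>P'(z) / (deg P \<cdot> P(z))\<close> of the images of the zeros is again such an image.

  If \<open>w \<notin> Z(f) + K\<close> and \<open>f = c \<Prod>(X - r\<^sub>i)\<close>, then all \<open>w - r\<^sub>i \<notin> K\<close>. Splitting off the factor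
  \<open>X - r\<^sub>N\<close> turns \<open>(T f)(w)\<close> into \<open>(T' h)(w)\<close> with \<open>T' = (w - r\<^sub>N) T + [T, X]\<close>, and
  \<open>T' \<phi>\<^sub>N\<^sub>-\<^sub>1\<close> is the polar derivative of \<open>T \<phi>\<^sub>N\<close> with respect to \<open>w - r\<^sub>N\<close>, whose zeros stay in
  \<open>K\<close>. Induction on the number of factors ends at a nonzero constant, so \<open>(T f)(w) \<noteq> 0\<close>.
\<close>

section \<open>Circular regions under inversion\<close>

definition circle_form :: "real \<Rightarrow> complex \<Rightarrow> real \<Rightarrow> complex \<Rightarrow> real" where
  "circle_form A B C x = A * (cmod x)\<^sup>2 + Re (B * x) + C"

lemma circle_form_inversion:
  assumes "v \<noteq> 0"
  shows "circle_form A B C (p - 1 / v) * (cmod v)\<^sup>2 =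
         circle_form (circle_form A B C p) (- (of_real (2 * A) * p + cnj B)) A v"
proof -
  have "(cmod (p - 1 / v))\<^sup>2 * (cmod v)\<^sup>2 = (cmod (p * v - 1))\<^sup>2"
    using assms by (simp flip: power_mult_distrib norm_mult add: left_diff_distrib)
  also have "\<dots> = (cmod p)\<^sup>2 * (cmod v)\<^sup>2 - 2 * Re (p * v) + 1"
    unfolding cmod_power2 by (simp add: power2_eq_square algebra_simps)
  finally have norm_part: "(cmod (p - 1 / v))\<^sup>2 * (cmod v)\<^sup>2 = \<dots>" .
  have "Re (B / v) * (cmod v)\<^sup>2 = Re (cnj B * v)"
    using assms by (subst complex_div_cnj) (simp del: of_real_power)
  then have linear_part: "Re (B * (p - 1 / v)) * (cmod v)\<^sup>2 = Re (B * p) * (cmod v)\<^sup>2 - Re (cnj B * v)"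
    by (simp add: right_diff_distrib left_diff_distrib)
  have "circle_form A B C (p - 1 / v) * (cmod v)\<^sup>2 =
        A * ((cmod (p - 1 / v))\<^sup>2 * (cmod v)\<^sup>2) + Re (B * (p - 1 / v)) * (cmod v)\<^sup>2 + C * (cmod v)\<^sup>2"
    by (simp add: circle_form_def algebra_simps)
  also have "\<dots> = A * ((cmod p)\<^sup>2 * (cmod v)\<^sup>2 - 2 * Re (p * v) + 1) +
                    (Re (B * p) * (cmod v)\<^sup>2 - Re (cnj B * v)) + C * (cmod v)\<^sup>2"
    unfolding norm_part linear_part ..
  also have "\<dots> = circle_form (circle_form A B C p) (- (of_real (2 * A) * p + cnj B)) A v"
    by (simp add: circle_form_def algebra_simps)
  finally show ?thesis .
qed

lemma convex_on_norm_power2: "convex_on UNIV (\<lambda>x::'a::real_inner. (norm x)\<^sup>2)"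
proof (rule convex_onI)
  fix t :: real and x y :: 'a
  assume t: "0 < t" "t < 1"
  have "(1 - t) * (norm x)\<^sup>2 + t * (norm y)\<^sup>2 - (norm ((1 - t) *\<^sub>R x + t *\<^sub>R y))\<^sup>2
        = t * (1 - t) * (norm (x - y))\<^sup>2"
    unfolding power2_norm_eq_inner
    by (simp add: inner_commute algebra_simps)
  moreover have "t * (1 - t) * (norm (x - y))\<^sup>2 \<ge> 0" using t by simp
  ultimately show "(norm ((1 - t) *\<^sub>R x + t *\<^sub>R y))\<^sup>2 \<le> (1 - t) * (norm x)\<^sup>2 + t * (norm y)\<^sup>2"
    by linarith
qed simp

lemma convex_on_circle_form:
  assumes "A \<ge> 0"
  shows "convex_on UNIV (circle_form A B C)"
proof (rule convex_onI)
  fix t :: real and x y :: complex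
  assume t: "0 < t" "t < 1"
  have "(cmod ((1 - t) *\<^sub>R x + t *\<^sub>R y))\<^sup>2 \<le> (1 - t) * (cmod x)\<^sup>2 + t * (cmod y)\<^sup>2"
    using convex_onD[OF convex_on_norm_power2, of t x y] t by simp
  then have "A * (cmod ((1 - t) *\<^sub>R x + t *\<^sub>R y))\<^sup>2 \<le> A * ((1 - t) * (cmod x)\<^sup>2 + t * (cmod y)\<^sup>2)"
    using assms by (rule mult_left_mono)
  then show "circle_form A B C ((1 - t) *\<^sub>R x + t *\<^sub>R y) \<le> (1 - t) * circle_form A B C x + t * circle_form A B C y"
    by (simp add: circle_form_def scaleR_conv_of_real algebra_simps)
qed simp

text \<open>
  Under \<open>v = 1 / (p - x)\<close> the region becomes \<open>{v \<noteq> 0. Q v < 0}\<close> for the convex form \<open>Q\<close> of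
  \<open>circle_form_inversion\<close>, and \<open>Q 0 = A \<ge> 0\<close> keeps \<open>0\<close> out of \<open>{Q < 0}\<close>. The centroid \<open>S / N\<close> of
  the points \<open>1 / (p - r i)\<close> therefore lies in \<open>{Q < 0}\<close>, and it is the image of \<open>p - N / S\<close>.
\<close>
lemma circle_form_centroid_lt:
  fixes r :: "nat \<Rightarrow> complex"
  assumes A: "A \<ge> 0" and p: "circle_form A B C p \<ge> 0" and N: "N > 0"
    and r: "\<forall>i<N. circle_form A B C (r i) < 0"
  defines "S \<equiv> \<Sum>i<N. 1 / (p - r i)"
  shows "S \<noteq> 0 \<and> circle_form A B C (p - of_nat N / S) < 0"
proof -
  define Q where "Q = circle_form (circle_form A B C p) (- (of_real (2 * A) * p + cnj B)) A"
  define v where "v i = 1 / (p - r i)" for i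
  define m where "m = S / of_nat N"
  have Q_v: "Q (v i) < 0" if "i < N" for i
  proof -
    have "r i \<noteq> p" using r p that by force
    then have "v i \<noteq> 0" by (simp add: v_def)
    have "Q (v i) = circle_form A B C (r i) * (cmod (v i))\<^sup>2"
      using circle_form_inversion[OF \<open>v i \<noteq> 0\<close>, of A B C p] \<open>r i \<noteq> p\<close>
      by (simp add: Q_def v_def)
    then show "Q (v i) < 0"
      using r that \<open>v i \<noteq> 0\<close> by (simp add: mult_neg_pos)
  qed
  have m_sum: "m = (\<Sum>i<N. (1 / real N) *\<^sub>R v i)"
    by (simp add: m_def S_def v_def scaleR_conv_of_real sum_divide_distrib mult.commute)
  have "Q m \<le> (\<Sum>i<N. (1 / real N) * Q (v i))"
    unfolding m_sum Q_def using N
    by (intro convex_on_sum[OF _ _ convex_on_circle_form[OF p]]) auto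
  also have "\<dots> < 0"
  proof -
    have "0 < (\<Sum>i<N. - ((1 / real N) * Q (v i)))"
      using N Q_v by (intro sum_pos) (auto simp: divide_neg_pos)
    then show ?thesis by (simp add: sum_negf)
  qed
  finally have Q_m: "Q m < 0" .
  have "m \<noteq> 0"
    using Q_m A by (auto simp: Q_def circle_form_def)
  then have "circle_form A B C (p - 1 / m) * (cmod m)\<^sup>2 < 0"
    using circle_form_inversion[of m A B C p] Q_m by (simp add: Q_def)
  then have "circle_form A B C (p - 1 / m) < 0"
    by (simp add: mult_less_0_iff)
  moreover have "S \<noteq> 0" using \<open>m \<noteq> 0\<close> by (simp add: m_def)
  ultimately show ?thesis by (simp add: m_def)
qed

text \<open>Closed regions: apply the open case to \<open>{x. circle_form A B C x < e}\<close> and let \<open>e \<rightarrow> 0\<close>.\<close>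
lemma circle_form_centroid_le:
  fixes r :: "nat \<Rightarrow> complex"
  assumes A: "A \<ge> 0" and p: "circle_form A B C p > 0" and N: "N > 0"
    and r: "\<forall>i<N. circle_form A B C (r i) \<le> 0"
  defines "S \<equiv> \<Sum>i<N. 1 / (p - r i)"
  shows "S \<noteq> 0 \<and> circle_form A B C (p - of_nat N / S) \<le> 0"
proof -
  have approx: "S \<noteq> 0 \<and> circle_form A B C (p - of_nat N / S) < e"
    if "0 < e" "e \<le> circle_form A B C p" for e
  proof -
    have shift: "circle_form A B (C - e) x = circle_form A B C x - e" for x
      by (simp add: circle_form_def)
    show ?thesis
      using circle_form_centroid_lt[OF A _ N, of B "C - e" p r] that r
      unfolding S_def shift by fastforce
  qed
  show ?thesis
  proof
    show "S \<noteq> 0" using approx[OF p order_refl] by blast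
    show "circle_form A B C (p - of_nat N / S) \<le> 0"
    proof (rule ccontr)
      assume "\<not> ?thesis"
      then show False
        using approx[of "min (circle_form A B C p) (circle_form A B C (p - of_nat N / S))"] p
        by auto
    qed
  qed
qed

lemma convex_circular_domain_circle_form:
  assumes "convex_circular_domain K"
  obtains A B C where "A \<ge> 0"
    "K = {x. circle_form A B C x < 0} \<or> K = {x. circle_form A B C x \<le> 0}"
proof -
  have disks: "ball c r = {x. circle_form 1 (- 2 * cnj c) ((cmod c)\<^sup>2 - r\<^sup>2) x < 0}"
    "cball c r = {x. circle_form 1 (- 2 * cnj c) ((cmod c)\<^sup>2 - r\<^sup>2) x \<le> 0}"
    if "r > 0" for c and r :: real
  proof -
    have "circle_form 1 (- 2 * cnj c) ((cmod c)\<^sup>2 - r\<^sup>2) x = (dist c x)\<^sup>2 - r\<^sup>2" for x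
      unfolding circle_form_def dist_norm cmod_power2 by (simp add: power2_eq_square algebra_simps)
    then show "ball c r = {x. circle_form 1 (- 2 * cnj c) ((cmod c)\<^sup>2 - r\<^sup>2) x < 0}"
      and "cball c r = {x. circle_form 1 (- 2 * cnj c) ((cmod c)\<^sup>2 - r\<^sup>2) x \<le> 0}"
      using that by (auto intro: power_strict_mono power_mono dest: power2_less_imp_less power2_le_imp_le)
  qed
  have half_planes: "{z. c < Re (z * cnj u)} = {x. circle_form 0 (- cnj u) c x < 0}"
    "{z. c \<le> Re (z * cnj u)} = {x. circle_form 0 (- cnj u) c x \<le> 0}" for u c
    by (auto simp: circle_form_def algebra_simps)
  from assms consider (disk) c r where "r > 0" "K = ball c r \<or> K = cball c r"
    | (half_plane) u c where "K = {z. c < Re (z * cnj u)} \<or> K = {z. c \<le> Re (z * cnj u)}"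
    unfolding convex_circular_domain_def by blast
  then show ?thesis
  proof cases
    case (disk c r)
    then show ?thesis
      using that[of 1 "- 2 * cnj c" "(cmod c)\<^sup>2 - r\<^sup>2"] disks by auto
  next
    case (half_plane u c)
    then show ?thesis
      using that[of 0 "- cnj u" c] half_planes by auto
  qed
qed

lemma circular_domain_centroid:
  fixes r :: "nat \<Rightarrow> complex"
  assumes K: "convex_circular_domain K" and p: "p \<notin> K" and N: "N > 0"
    and r: "\<forall>i<N. r i \<in> K"
  defines "S \<equiv> \<Sum>i<N. 1 / (p - r i)"
  shows "S \<noteq> 0 \<and> p - of_nat N / S \<in> K"
proof -
  obtain A B C where A: "A \<ge> 0"
    and K_form: "K = {x. circle_form A B C x < 0} \<or> K = {x. circle_form A B C x \<le> 0}"
    using convex_circular_domain_circle_form[OF K] .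
  from K_form show ?thesis
  proof
    assume "K = {x. circle_form A B C x < 0}"
    then show ?thesis
      using circle_form_centroid_lt[OF A _ N, of B C p r] p r unfolding S_def by auto
  next
    assume "K = {x. circle_form A B C x \<le> 0}"
    then show ?thesis
      using circle_form_centroid_le[OF A _ N, of B C p r] p r unfolding S_def by auto
  qed
qed

section \<open>Gauss-Lucas and Laguerre theorems for circular domains\<close>

lemma complex_poly_linear_factors:
  fixes P :: "complex poly"
  obtains c r where "P = smult c (\<Prod>i<degree P. [:- r i, 1:])"
    and "\<forall>i<degree P. poly P (r i) = 0"
proof -
  obtain r where r: "smult (lead_coeff P) (\<Prod>i<degree P. [:- r i, 1:]) = P"
    using complex_poly_decompose' by blast
  have "poly P (r i) = 0" if "i < degree P" for i
    by (subst r[symmetric]) (use that in \<open>force simp: poly_prod prod_zero_iff\<close>)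
  with r show ?thesis by (intro that[of "lead_coeff P" r]) auto
qed

lemma poly_pderiv_prod_linear:
  fixes r :: "nat \<Rightarrow> complex"
  assumes "\<forall>i<N. r i \<noteq> z"
  shows "poly (pderiv (\<Prod>i<N. [:- r i, 1:])) z = poly (\<Prod>i<N. [:- r i, 1:]) z * (\<Sum>i<N. 1 / (z - r i))"
  using assms
proof (induction N)
  case 0
  then show ?case by simp
next
  case (Suc N)
  define Q where "Q = (\<Prod>i<N. [:- r i, 1:])"
  have "z - r N \<noteq> 0" using Suc.prems by auto
  have prod_Suc: "(\<Prod>i<Suc N. [:- r i, 1:]) = Q * [:- r N, 1:]"
    by (simp add: Q_def)
  have "poly (pderiv (\<Prod>i<Suc N. [:- r i, 1:])) z = poly Q z + (z - r N) * poly (pderiv Q) z"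
    unfolding prod_Suc pderiv_mult by (simp add: pderiv_pCons algebra_simps)
  also have "\<dots> = poly Q z * (z - r N) * (\<Sum>i<Suc N. 1 / (z - r i))"
    using Suc \<open>z - r N \<noteq> 0\<close> by (simp add: Q_def field_simps)
  also have "poly Q z * (z - r N) = poly (\<Prod>i<Suc N. [:- r i, 1:]) z"
    unfolding prod_Suc by (simp add: algebra_simps)
  finally show ?case .
qed

lemma circular_domain_pderiv_centroid:
  fixes P :: "complex poly"
  assumes K: "convex_circular_domain K" and deg: "degree P > 0"
    and roots: "Zset P \<subseteq> K" and z: "z \<notin> K"
  shows "poly (pderiv P) z \<noteq> 0 \<and> z - of_nat (degree P) * poly P z / poly (pderiv P) z \<in> K"
proof -
  obtain c r where P_eq: "P = smult c (\<Prod>i<degree P. [:- r i, 1:])"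
    and r_roots: "\<forall>i<degree P. poly P (r i) = 0"
    using complex_poly_linear_factors .
  define R where "R = (\<Prod>i<degree P. [:- r i, 1:])"
  define S where "S = (\<Sum>i<degree P. 1 / (z - r i))"
  have r_K: "\<forall>i<degree P. r i \<in> K"
    using r_roots roots by (auto simp: Zset_def)
  have "poly P z \<noteq> 0"
    using roots z by (auto simp: Zset_def)
  have P_R: "P = smult c R"
    using P_eq by (simp only: R_def)
  have "poly (pderiv P) z = c * poly (pderiv R) z"
    by (simp add: P_R pderiv_smult)
  also have "\<dots> = c * poly R z * S"
    using poly_pderiv_prod_linear[of "degree P" r z] r_K z by (auto simp: R_def S_def)
  also have "c * poly R z = poly P z"
    by (simp add: P_R)
  finally have "poly (pderiv P) z = poly P z * S" .
  moreover have "S \<noteq> 0 \<and> z - of_nat (degree P) / S \<in> K"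
    using circular_domain_centroid[OF K z deg r_K] by (simp add: S_def)
  ultimately show ?thesis
    using \<open>poly P z \<noteq> 0\<close> by simp
qed

lemma gauss_lucas_circular_domain:
  fixes P :: "complex poly"
  assumes "convex_circular_domain K" "degree P > 0" "Zset P \<subseteq> K"
  shows "Zset (pderiv P) \<subseteq> K"
  using circular_domain_pderiv_centroid[OF assms] by (auto simp: Zset_def)

text \<open>The polar derivative of \<open>P\<close> regarded as a polynomial of formal degree \<open>n\<close>.\<close>
definition polar_pderiv :: "nat \<Rightarrow> complex \<Rightarrow> complex poly \<Rightarrow> complex poly" where
  "polar_pderiv n t P = smult (of_nat n) P - [:- t, 1:] * pderiv P"

lemma laguerre_circular_domain:
  fixes P :: "complex poly"
  assumes "convex_circular_domain K" "degree P > 0" "Zset P \<subseteq> K" and t: "t \<notin> K"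
  shows "Zset (polar_pderiv (degree P) t P) \<subseteq> K"
proof
  fix z assume "z \<in> Zset (polar_pderiv (degree P) t P)"
  then have polar_z: "of_nat (degree P) * poly P z = (z - t) * poly (pderiv P) z"
    by (simp add: Zset_def polar_pderiv_def algebra_simps)
  show "z \<in> K"
  proof (rule ccontr)
    assume "z \<notin> K"
    with circular_domain_pderiv_centroid[OF assms(1-3)]
    have "poly (pderiv P) z \<noteq> 0" "z - of_nat (degree P) * poly P z / poly (pderiv P) z \<in> K"
      by auto
    moreover have "of_nat (degree P) * poly P z / poly (pderiv P) z = z - t"
      using polar_z \<open>poly (pderiv P) z \<noteq> 0\<close> by simp
    ultimately show False
      using t by simp
  qed
qed

section \<open>Differential operators with constant coefficients\<close>

lemma higher_pderiv_eq_0: "degree f < k \<Longrightarrow> (pderiv ^^ k) f = 0"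
  by (rule poly_eqI) (simp add: coeff_higher_pderiv coeff_eq_0)

lemma higher_pderiv_linear_factor:
  "(pderiv ^^ k) ([:- z, 1:] * h) = [:- z, 1:] * (pderiv ^^ k) h + smult (of_nat k) ((pderiv ^^ (k - 1)) h)"
proof (induction k)
  case 0
  then show ?case by simp
next
  case (Suc k)
  then show ?case
    by (cases k) (simp_all add: pderiv_add pderiv_mult pderiv_smult pderiv_pCons algebra_simps smult_add_left)
qed

lemma coeff_diffop: "coeff (diffop a n f) j = (\<Sum>k\<le>n. a k * coeff ((pderiv ^^ k) f) j)"
  by (simp add: diffop_def coeff_sum)

lemma diffop_smult: "diffop a n (smult c f) = smult c (diffop a n f)"
  by (rule poly_eqI) (simp add: coeff_diffop higher_pderiv_smult sum_distrib_left mult_ac)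

lemma diffop_coeffs_linear: "diffop (\<lambda>k. c * a k + b k) n f = smult c (diffop a n f) + diffop b n f"
  by (rule poly_eqI) (simp add: coeff_diffop sum_distrib_left sum.distrib algebra_simps)

lemma diffop_truncate:
  assumes "degree f \<le> m" "m \<le> n"
  shows "diffop a n f = diffop a m f"
  unfolding diffop_def
  by (rule sum.mono_neutral_right) (use assms in \<open>auto simp: higher_pderiv_eq_0\<close>)

lemma pderiv_diffop: "pderiv (diffop a n f) = diffop a n (pderiv f)"
proof (rule poly_eqI)
  fix j
  have "(pderiv ^^ k) (pderiv f) = pderiv ((pderiv ^^ k) f)" for k
    by (rule funpow_swap1[symmetric])
  then show "coeff (pderiv (diffop a n f)) j = coeff (diffop a n (pderiv f)) j"
    by (simp add: coeff_diffop coeff_pderiv sum_distrib_left mult_ac)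
qed

lemma degree_diffop:
  assumes "a 0 \<noteq> 0"
  shows "degree (diffop a n f) = degree f"
proof (rule antisym)
  have "coeff (diffop a n f) j = 0" if "j > degree f" for j
    using that by (simp add: coeff_diffop coeff_higher_pderiv coeff_eq_0)
  then show "degree (diffop a n f) \<le> degree f"
    by (simp add: degree_le)
  have "coeff (diffop a n f) (degree f) = (\<Sum>k\<le>n. if k = 0 then a 0 * lead_coeff f else 0)"
    unfolding coeff_diffop
    by (intro sum.cong refl) (simp add: coeff_higher_pderiv coeff_eq_0)
  also have "\<dots> = a 0 * lead_coeff f"
    by simp
  finally show "degree f \<le> degree (diffop a n f)"
    using assms by (cases "f = 0") (simp_all add: le_degree)
qed

lemma diffop_linear_factor:
  assumes "degree h \<le> n"
  shows "diffop a (Suc n) ([:- z, 1:] * h) =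
         [:- z, 1:] * diffop a n h + diffop (\<lambda>k. of_nat (Suc k) * a (Suc k)) n h"
proof -
  have summand: "smult (a k) ((pderiv ^^ k) ([:- z, 1:] * h)) =
      [:- z, 1:] * smult (a k) ((pderiv ^^ k) h) + smult (a k * of_nat k) ((pderiv ^^ (k - 1)) h)" for k
    unfolding higher_pderiv_linear_factor by (simp add: smult_add_right del: mult_pCons_left)
  have "diffop a (Suc n) ([:- z, 1:] * h) =
        [:- z, 1:] * diffop a (Suc n) h + (\<Sum>k\<le>Suc n. smult (a k * of_nat k) ((pderiv ^^ (k - 1)) h))"
    unfolding diffop_def summand sum.distrib sum_distrib_left ..
  also have "diffop a (Suc n) h = diffop a n h"
    using assms by (intro diffop_truncate) auto
  also have "(\<Sum>k\<le>Suc n. smult (a k * of_nat k) ((pderiv ^^ (k - 1)) h)) =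
             diffop (\<lambda>k. of_nat (Suc k) * a (Suc k)) n h"
    by (subst sum.atMost_Suc_shift) (simp add: diffop_def mult_ac)
  finally show ?thesis .
qed

lemma poly_diffop_linear_factor:
  assumes "degree h \<le> n"
  shows "poly (diffop a (Suc n) ([:- z, 1:] * h)) w =
         poly (diffop (\<lambda>k. (w - z) * a k + of_nat (Suc k) * a (Suc k)) n h) w"
  unfolding diffop_linear_factor[OF assms] diffop_coeffs_linear by (simp add: algebra_simps)

lemma diffop_one: "diffop a n 1 = [:a 0:]"
proof -
  have "diffop a n 1 = (\<Sum>k\<le>n. if k = 0 then [:a 0:] else 0)"
    unfolding diffop_def by (intro sum.cong refl) (simp add: higher_pderiv_eq_0)
  then show ?thesis by simp
qed

lemma invertible_diffop_coeff_0:
  assumes "invertible_on_Pn (diffop a n) n"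
  shows "a 0 \<noteq> 0"
proof
  assume "a 0 = 0"
  moreover have "diffop a n 0 = 0"
    by (simp add: diffop_def)
  ultimately have "diffop a n 1 = diffop a n 0"
    by (simp add: diffop_one)
  moreover have "inj_on (diffop a n) (Pn n)"
    using assms bij_betw_imp_inj_on unfolding invertible_on_Pn_def by blast
  moreover have "1 \<in> Pn n" "0 \<in> Pn n"
    by (simp_all add: Pn_def)
  ultimately have "(1 :: complex poly) = 0"
    by (blast dest: inj_onD)
  then show False
    by simp
qed

lemma degree_phi: "degree (phi n) = n"
  by (simp add: phi_def degree_monom_eq)

lemma of_nat_Suc_div_fact_Suc: "of_nat (Suc n) * (1 / of_nat (fact (Suc n))) = (1 / of_nat (fact n) :: complex)"
proof -
  have "(of_nat (fact n) :: complex) \<noteq> 0" "(of_nat (Suc n) :: complex) \<noteq> 0"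
    by (simp_all del: of_nat_Suc)
  then show ?thesis
    unfolding fact_Suc of_nat_mult by (simp del: of_nat_Suc)
qed

lemma pderiv_phi_Suc: "pderiv (phi (Suc n)) = phi n"
  unfolding phi_def pderiv_monom diff_Suc_1 of_nat_Suc_div_fact_Suc ..

lemma x_mult_phi: "[:0, 1:] * phi n = smult (of_nat (Suc n)) (phi (Suc n))"
proof -
  have "[:0, 1:] * phi n = monom (1 / of_nat (fact n)) (Suc n)"
    by (simp add: phi_def monom_Suc)
  also have "\<dots> = smult (of_nat (Suc n)) (phi (Suc n))"
    unfolding phi_def smult_monom of_nat_Suc_div_fact_Suc ..
  finally show ?thesis .
qed

lemma pderiv_diffop_phi_Suc: "pderiv (diffop a (Suc n) (phi (Suc n))) = diffop a n (phi n)"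
  using diffop_truncate[of "phi n" n "Suc n" a] by (simp add: pderiv_diffop pderiv_phi_Suc degree_phi)

lemma diffop_phi_polar_pderiv:
  "diffop (\<lambda>k. t * a k + of_nat (Suc k) * a (Suc k)) n (phi n) =
   polar_pderiv (Suc n) t (diffop a (Suc n) (phi (Suc n)))"
proof -
  define P where "P = diffop a (Suc n) (phi (Suc n))"
  have "smult (of_nat (Suc n)) P =
        [:0, 1:] * diffop a n (phi n) + diffop (\<lambda>k. of_nat (Suc k) * a (Suc k)) n (phi n)"
    using diffop_linear_factor[of "phi n" n a 0]
    by (simp add: P_def x_mult_phi diffop_smult degree_phi del: mult_pCons_left)
  then have "diffop (\<lambda>k. t * a k + of_nat (Suc k) * a (Suc k)) n (phi n) =
      smult t (diffop a n (phi n)) + (smult (of_nat (Suc n)) P - [:0, 1:] * diffop a n (phi n))"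
    unfolding diffop_coeffs_linear by (simp del: mult_pCons_left)
  also have "\<dots> = polar_pderiv (Suc n) t P"
    by (simp add: polar_pderiv_def P_def pderiv_diffop_phi_Suc algebra_simps)
  finally show ?thesis
    by (simp only: P_def)
qed

lemma Zset_diffop_phi_lower:
  assumes K: "convex_circular_domain K" and a0: "a 0 \<noteq> 0"
    and roots: "Zset (diffop a n (phi n)) \<subseteq> K" and "m \<le> n"
  shows "Zset (diffop a m (phi m)) \<subseteq> K"
  using \<open>m \<le> n\<close>
proof (induction m rule: inc_induct)
  case base
  show ?case using roots .
next
  case (step m)
  have "degree (diffop a (Suc m) (phi (Suc m))) = Suc m"
    using a0 by (simp add: degree_diffop degree_phi)
  then have "Zset (pderiv (diffop a (Suc m) (phi (Suc m)))) \<subseteq> K"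
    using gauss_lucas_circular_domain[OF K _ step.IH] by simp
  then show ?case
    by (simp add: pderiv_diffop_phi_Suc)
qed

lemma poly_diffop_prod_nonzero:
  fixes r :: "nat \<Rightarrow> complex"
  assumes K: "convex_circular_domain K"
    and "a 0 \<noteq> 0" "Zset (diffop a N (phi N)) \<subseteq> K" "\<forall>i<N. w - r i \<notin> K"
  shows "poly (diffop a N (\<Prod>i<N. [:- r i, 1:])) w \<noteq> 0"
  using assms(2-4)
proof (induction N arbitrary: a)
  case 0
  then show ?case by (simp add: diffop_def)
next
  case (Suc N)
  define t where "t = w - r N"
  define b where "b = (\<lambda>k. t * a k + of_nat (Suc k) * a (Suc k))"
  define h where "h = (\<Prod>i<N. [:- r i, 1:])"
  have t: "t \<notin> K"
    using Suc.prems(3) by (simp add: t_def)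
  have "degree h = (\<Sum>i<N. degree [:- r i, 1:])"
    unfolding h_def by (rule degree_prod_sum_eq) simp
  then have "degree h \<le> N"
    by simp
  moreover have "(\<Prod>i<Suc N. [:- r i, 1:]) = [:- r N, 1:] * h"
    by (simp add: h_def mult.commute)
  ultimately have eval: "poly (diffop a (Suc N) (\<Prod>i<Suc N. [:- r i, 1:])) w = poly (diffop b N h) w"
    by (simp add: poly_diffop_linear_factor b_def t_def del: mult_pCons_left)
  have "degree (diffop a (Suc N) (phi (Suc N))) = Suc N"
    using Suc.prems(1) by (simp add: degree_diffop degree_phi)
  then have roots_b: "Zset (diffop b N (phi N)) \<subseteq> K"
    using laguerre_circular_domain[OF K _ Suc.prems(2) t]
    unfolding b_def diffop_phi_polar_pderiv by simp
  have "b 0 \<noteq> 0"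
  proof
    assume "b 0 = 0"
    moreover have "Zset (diffop a 1 (phi 1)) \<subseteq> K"
      using Zset_diffop_phi_lower[OF K Suc.prems(1,2)] by simp
    moreover have "poly (diffop a 1 (phi 1)) t = b 0"
      by (simp add: diffop_def phi_def b_def poly_monom pderiv_monom algebra_simps)
    ultimately show False
      using t by (auto simp: Zset_def)
  qed
  have "poly (diffop b N h) w \<noteq> 0"
    using Suc.IH[OF \<open>b 0 \<noteq> 0\<close> roots_b] Suc.prems(3) by (simp add: h_def)
  then show ?case
    using eval by simp
qed

lemma Zset_diffop_subset_setsum:
  assumes K: "convex_circular_domain K" and a0: "a 0 \<noteq> 0"
    and roots: "Zset (diffop a n (phi n)) \<subseteq> K" and f: "f \<noteq> 0" "degree f \<le> n"
  shows "Zset (diffop a n f) \<subseteq> setsum (Zset f) K"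
proof
  fix x assume x: "x \<in> Zset (diffop a n f)"
  show "x \<in> setsum (Zset f) K"
  proof (rule ccontr)
    assume "x \<notin> setsum (Zset f) K"
    then have outside: "x - u \<notin> K" if "poly f u = 0" for u
      using that unfolding setsum_def Zset_def by force
    define m where "m = degree f"
    obtain c r where f_eq: "f = smult c (\<Prod>i<m. [:- r i, 1:])"
      and r_roots: "\<forall>i<m. poly f (r i) = 0"
      unfolding m_def by (rule complex_poly_linear_factors)
    have "diffop a n f = diffop a m f"
      using f by (intro diffop_truncate) (auto simp: m_def)
    also have "\<dots> = smult c (diffop a m (\<Prod>i<m. [:- r i, 1:]))"
      by (subst f_eq) (simp only: diffop_smult)
    finally have "poly (diffop a n f) x = c * poly (diffop a m (\<Prod>i<m. [:- r i, 1:])) x"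
      by simp
    moreover have "c \<noteq> 0"
      using f f_eq by auto
    moreover have "poly (diffop a m (\<Prod>i<m. [:- r i, 1:])) x \<noteq> 0"
      using poly_diffop_prod_nonzero[OF K a0 Zset_diffop_phi_lower[OF K a0 roots]] f outside r_roots
      by (auto simp: m_def)
    ultimately show False
      using x f by (simp add: Zset_def)
  qed
qed

theorem mainTheorem8:
  fixes n :: nat and a :: "nat \<Rightarrow> complex" and \<Omega> :: "complex set"
  assumes "n \<ge> 1"
    and "invertible_on_Pn (diffop a n) n"
    and "convex_circular_domain \<Omega>"
    and "Zset (diffop a n (phi n)) \<subseteq> \<Omega>"
  shows "\<forall>f \<in> Pn n. f \<noteq> 0 \<longrightarrow> Zset (diffop a n f) \<subseteq> setsum (Zset f) \<Omega>"
proof -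
  have "a 0 \<noteq> 0"
    using assms(2) by (rule invertible_diffop_coeff_0)
  then show ?thesis
    using Zset_diffop_subset_setsum[OF assms(3) _ assms(4)] by (auto simp: Pn_def)
qed

end
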